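(* Let $A\in\mathbb{R}^{m\times n}$ with $m>n$ and $\mathrm{rank}(A)=n$, $b\in\mathrm{range}(A)$, $c\in\mathbb{R}^n$, and consider the linear program $\min_{x\in\mathbb{R}^n}\{c^\top x: Ax=b\}$, whose unique feasible (hence optimal) point is $x^*=(A^\top A)^{-1}A^\top b$. Let $\eta>0$, $t_0=1$, $y_0=0$, $\lambda_0\in\mathbb{R}^m$ arbitrary, and for $k\ge0$: $$x_{k+1}=\arg\min_{x\in\mathbb{R}^n}\{c^\top x+y_k^\top(Ax-b)+\tfrac\eta2\|Ax-b\|_2^2\}=(A^\top A)^{-1}\big(A^\top b-\tfrac1\eta(A^\top y_k+c)\big),$$ $$\lambda_{k+1}=y_k+\eta(Ax_{k+1}-b),\quad t_{k+1}=\tfrac{1+\sqrt{1+4t_k^2}}{2},\quad y_{k+1}=\lambda_{k+1}+\tfrac{t_k-1}{t_{k+1}}(\lambda_{k+1}-\lambda_k)+\tfrac{t_k}{t_{k+1}}(\lambda_{k+1}-y_k).$$ Then for every $k\ge1$, $\lambda_k$ is an optimal solution of the dual problem $\max\{-b^\top\lambda: A^\top\lambda+c=0\}$, and for every $T\ge1$, $$x_T=x^*-\frac{(-1)^{T-1}}{\eta\,t_{T-1}}(A^\top A)^{-1}c,$$ so that $$|c^\top(x^*-x_T)|=\frac{c^\top(A^\top A)^{-1}c}{\eta\,t_{T-1}},\qquad\|Ax_T-b\|=\frac{\|A(A^\top A)^{-1}c\|}{\eta\,t_{T-1}},$$ for any norm $\|\cdot\|$, where $\frac{T}{2}\le t_{T-1}\le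 T$. In particular, when $c\neq0$ both the primal optimality gap and the feasibility violation are of exact order $1/T$. *)

theory Defs
  imports "HOL-Analysis.Analysis" "HOL-Library.Landau_Symbols"
begin

text \<open>A norm on a real vector space, in the usual axiomatic sense
  (used to express "for any norm").\<close>
definition is_norm :: "('a::real_vector \<Rightarrow> real) \<Rightarrow> bool" where
  "is_norm N \<longleftrightarrow>
     (\<forall>x. 0 \<le> N x) \<and> (\<forall>x. N x = 0 \<longleftrightarrow> x = 0) \<and>
     (\<forall>a x. N (a *\<^sub>R x) = \<bar>a\<bar> * N x) \<and> (\<forall>x y. N (x + y) \<le> N x + N y)"

definition dual_optimal ::
  "real^'n^'m \<Rightarrow> real^'m \<Rightarrow> real^'n \<Rightarrow> real^'m \<Rightarrow> bool" where
  "dual_optimal A b c lam \<longleftrightarrow>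
     transpose A *v lam + c = 0 \<and>
     (\<forall>mu. transpose A *v mu + c = 0 \<longrightarrow> - (b \<bullet> mu) \<le> - (b \<bullet> lam))"

definition aug_lag ::
  "real^'n^'m \<Rightarrow> real^'m \<Rightarrow> real^'n \<Rightarrow> real \<Rightarrow> real^'m \<Rightarrow> real^'n \<Rightarrow> real" where
  "aug_lag A b c \<eta> y x = c \<bullet> x + y \<bullet> (A *v x - b) + \<eta> / 2 * (norm (A *v x - b))\<^sup>2"

end

theory Submission
  imports Defs
begin

text \<open>The x-update has the closed form x(k+1) = G^-1 (A^T b - (A^T y(k) + c) / \<eta>) with
  G = A^T A, and this makes every \<lambda>(k+1) dual feasible, A^T \<lambda>(k+1) + c = 0. The dual
  objective is constant (equal to c \<bullet> x*) on that affine set, so feasibility already means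
  optimality. Applying A^T to the y-update, the momentum term vanishes and the dual residual
  r(k) = A^T y(k) + c obeys r(k+1) = -(t(k) / t(k+1)) r(k); hence r(k) = (-1)^k c / t(k)
  and x(k+1) = x* - G^-1 r(k) / \<eta> exactly. Finally t(k) + 1/2 \<le> t(k+1) \<le> t(k) + 1
  traps t(k) between (k+1)/2 and k+1.\<close>

abbreviation gram_inv :: "real^'n^'m \<Rightarrow> real^'n^'n" where
  "gram_inv A \<equiv> matrix_inv (transpose A ** A)"

lemma matrix_inv_left_right:
  assumes "invertible A"
  shows "matrix_inv A ** A = mat 1" "A ** matrix_inv A = mat 1"
proof -
  have "A ** matrix_inv A = mat 1 \<and> matrix_inv A ** A = mat 1"
    using assms unfolding invertible_def matrix_inv_def by (rule someI_ex)
  then show "matrix_inv A ** A = mat 1" "A ** matrix_inv A = mat 1" by auto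
qed

lemma transpose_mult_vector_inner:
  fixes A :: "real^'n^'m"
  shows "(transpose A *v v) \<bullet> d = v \<bullet> (A *v d)"
  by (simp add: dot_lmul_matrix)

lemma invertible_gram_matrix:
  fixes A :: "real^'n^'m"
  assumes inj: "inj ((*v) A)"
  shows "invertible (transpose A ** A)"
proof -
  let ?G = "transpose A ** A"
  have "inj ((*v) ?G)"
  proof (rule injI)
    fix u v assume "?G *v u = ?G *v v"
    then have "(transpose A *v (A *v (u - v))) \<bullet> (u - v) = 0"
      by (simp add: matrix_vector_mult_diff_distrib matrix_vector_mul_assoc
          del: transpose_matrix_vector)
    then have "(A *v (u - v)) \<bullet> (A *v (u - v)) = 0"
      by (simp only: transpose_mult_vector_inner)
    then have "A *v u = A *v v" by (simp add: matrix_vector_mult_diff_distrib)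
    then show "u = v" using inj by (simp add: inj_eq)
  qed
  then show ?thesis
    using matrix_left_invertible_injective invertible_left_inverse by blast
qed

lemma gram_inv_right_cancel:
  fixes A :: "real^'n^'m"
  assumes "inj ((*v) A)"
  shows "transpose A *v (A *v (gram_inv A *v v)) = v"
  using matrix_inv_left_right(2)[OF invertible_gram_matrix[OF assms]]
  by (metis matrix_vector_mul_assoc matrix_vector_mul_lid)

lemma gram_inv_left_cancel:
  fixes A :: "real^'n^'m"
  assumes "inj ((*v) A)"
  shows "gram_inv A *v (transpose A *v (A *v z)) = z"
  using matrix_inv_left_right(1)[OF invertible_gram_matrix[OF assms]]
  by (metis matrix_vector_mul_assoc matrix_vector_mul_lid)

lemma inner_gram_inv:
  fixes A :: "real^'n^'m"
  assumes "inj ((*v) A)"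
  shows "c \<bullet> (gram_inv A *v c) = (norm (A *v (gram_inv A *v c)))\<^sup>2"
proof -
  have "c \<bullet> (gram_inv A *v c)
      = (transpose A *v (A *v (gram_inv A *v c))) \<bullet> (gram_inv A *v c)"
    by (simp only: gram_inv_right_cancel[OF assms])
  also have "\<dots> = (A *v (gram_inv A *v c)) \<bullet> (A *v (gram_inv A *v c))"
    by (simp only: transpose_mult_vector_inner)
  finally show ?thesis by (simp add: power2_norm_eq_inner)
qed

lemma gram_inv_image_nonzero:
  fixes A :: "real^'n^'m"
  assumes "inj ((*v) A)" and "c \<noteq> 0"
  shows "A *v (gram_inv A *v c) \<noteq> 0"
  using gram_inv_right_cancel[OF assms(1), of c] assms(2) by auto

lemma aug_lag_add:
  fixes A :: "real^'n^'m"
  shows "aug_lag A b c \<eta> y (x0 + d) = aug_lag A b c \<eta> y x0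
    + (c + transpose A *v y + \<eta> *\<^sub>R (transpose A *v (A *v x0 - b))) \<bullet> d
    + \<eta> / 2 * (norm (A *v d))\<^sup>2"
proof -
  define r where "r = A *v x0 - b"
  have "A *v (x0 + d) - b = r + A *v d"
    unfolding r_def by (simp add: matrix_vector_right_distrib)
  moreover have "(norm (r + A *v d))\<^sup>2 = (norm r)\<^sup>2 + 2 * (r \<bullet> (A *v d)) + (norm (A *v d))\<^sup>2"
    by (simp add: power2_norm_eq_inner algebra_simps inner_commute)
  moreover have "y \<bullet> (A *v d) = (transpose A *v y) \<bullet> d" "r \<bullet> (A *v d) = (transpose A *v r) \<bullet> d"
    by (simp_all only: transpose_mult_vector_inner)
  ultimately show ?thesis
    unfolding aug_lag_def r_def[symmetric]
    by (simp add: inner_add_left inner_add_right algebra_simps)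
qed

lemma aug_lag_argmin:
  fixes A :: "real^'n^'m"
  assumes inj: "inj ((*v) A)" and eta: "\<eta> > 0"
    and min: "\<And>z. aug_lag A b c \<eta> y xm \<le> aug_lag A b c \<eta> y z"
  shows "xm = gram_inv A *v (transpose A *v b - (1 / \<eta>) *\<^sub>R (transpose A *v y + c))"
proof -
  define x0 where "x0 = gram_inv A *v (transpose A *v b - (1 / \<eta>) *\<^sub>R (transpose A *v y + c))"
  have "transpose A *v (A *v x0) = transpose A *v b - (1 / \<eta>) *\<^sub>R (transpose A *v y + c)"
    unfolding x0_def by (rule gram_inv_right_cancel[OF inj])
  then have "\<eta> *\<^sub>R (transpose A *v (A *v x0)) = \<eta> *\<^sub>R (transpose A *v b) - (transpose A *v y + c)"
    using eta by (simp add: scaleR_diff_right)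
  then have stationary: "c + transpose A *v y + \<eta> *\<^sub>R (transpose A *v (A *v x0 - b)) = 0"
    by (simp add: matrix_vector_mult_diff_distrib scaleR_diff_right del: transpose_matrix_vector)
  have "aug_lag A b c \<eta> y x0 + \<eta> / 2 * (norm (A *v (xm - x0)))\<^sup>2 = aug_lag A b c \<eta> y xm"
    using aug_lag_add[of A b c \<eta> y x0 "xm - x0"] stationary by simp
  also have "\<dots> \<le> aug_lag A b c \<eta> y x0" by (rule min)
  finally have "A *v (xm - x0) = 0"
    using eta by (simp add: mult_le_0_iff)
  then show ?thesis
    using inj unfolding x0_def[symmetric] by (simp add: matrix_vector_mult_diff_distrib inj_eq)
qed

lemma dual_optimal_if_feasible:
  fixes A :: "real^'n^'m"
  assumes "b \<in> range ((*v) A)" and "transpose A *v lam + c = 0"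
  shows "dual_optimal A b c lam"
proof -
  obtain z where b: "b = A *v z" using assms(1) by auto
  have "b \<bullet> mu = - (c \<bullet> z)" if "transpose A *v mu + c = 0" for mu
  proof -
    have "b \<bullet> mu = mu \<bullet> (A *v z)" unfolding b by (rule inner_commute)
    also have "\<dots> = (transpose A *v mu) \<bullet> z" by (simp only: transpose_mult_vector_inner)
    also have "transpose A *v mu = - c"
      using that by (simp add: eq_neg_iff_add_eq_0 del: transpose_matrix_vector)
    finally show ?thesis by simp
  qed
  then show ?thesis
    using assms(2) unfolding dual_optimal_def by (simp del: transpose_matrix_vector)
qed

lemma nesterov_step_bounds:
  fixes \<tau> :: real
  assumes "0 \<le> \<tau>"
  shows "\<tau> + 1 / 2 \<le> (1 + sqrt (1 + 4 * \<tau>\<^sup>2)) / 2"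
    and "(1 + sqrt (1 + 4 * \<tau>\<^sup>2)) / 2 \<le> \<tau> + 1"
proof -
  have "2 * \<tau> \<le> sqrt (1 + 4 * \<tau>\<^sup>2)"
    by (rule real_le_rsqrt) (simp add: power2_eq_square)
  then show "\<tau> + 1 / 2 \<le> (1 + sqrt (1 + 4 * \<tau>\<^sup>2)) / 2" by simp
  have "sqrt (1 + 4 * \<tau>\<^sup>2) \<le> 1 + 2 * \<tau>"
    using assms by (intro real_le_lsqrt) (simp_all add: power2_eq_square algebra_simps)
  then show "(1 + sqrt (1 + 4 * \<tau>\<^sup>2)) / 2 \<le> \<tau> + 1" by simp
qed

lemma nesterov_sequence_bounds:
  fixes t :: "nat \<Rightarrow> real"
  assumes t0: "t 0 = 1" and t_upd: "\<And>k. t (Suc k) = (1 + sqrt (1 + 4 * (t k)\<^sup>2)) / 2"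
  shows "real (Suc k) / 2 \<le> t k \<and> t k \<le> real (Suc k)"
proof (induction k)
  case 0
  then show ?case using t0 by simp
next
  case (Suc k)
  then have "0 \<le> t k" by linarith
  with Suc show ?case
    using nesterov_step_bounds[of "t k"] unfolding t_upd[symmetric] by simp
qed

lemma const_divide_bigtheta_inverse:
  fixes f s :: "nat \<Rightarrow> real"
  assumes "K \<noteq> 0" and "c1 > 0" and "c2 > 0"
    and bounds: "eventually (\<lambda>T. c1 * real T \<le> s T \<and> s T \<le> c2 * real T) at_top"
    and f: "eventually (\<lambda>T. f T = K / s T) at_top"
  shows "f \<in> \<Theta>(\<lambda>T. 1 / real T)"
proof -
  have "eventually (\<lambda>T. c1 * norm (real T) \<le> norm (s T) \<and> norm (s T) \<le> c2 * norm (real T)) at_top"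
    using bounds
  proof eventually_elim
    case (elim T)
    moreover have "0 \<le> c1 * real T" using assms(2) by simp
    ultimately show ?case by simp
  qed
  then have "s \<in> \<Theta>(\<lambda>T. real T)" by (rule bigthetaI'[OF assms(2,3)])
  then have "(\<lambda>T. K / s T) \<in> \<Theta>(\<lambda>T. 1 / real T)"
    using assms(1) by (intro bigtheta_divide) simp_all
  then show ?thesis
    using f by (rule landau_theta.ev_eq_trans2[rotated])
qed

lemma is_norm_norm: "is_norm norm"
  unfolding is_norm_def by (simp add: norm_triangle_ineq)

locale accelerated_alm =
  fixes A :: "real^'n^'m" and b :: "real^'m" and c :: "real^'n" and \<eta> :: real
    and x :: "nat \<Rightarrow> real^'n" and lam y :: "nat \<Rightarrow> real^'m" and t :: "nat \<Rightarrow> real"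
  assumes inj: "inj ((*v) A)"
    and b_range: "b \<in> range ((*v) A)"
    and eta_pos: "\<eta> > 0"
    and t0: "t 0 = 1"
    and y0: "y 0 = 0"
    and x_upd: "\<And>k z. aug_lag A b c \<eta> (y k) (x (Suc k)) \<le> aug_lag A b c \<eta> (y k) z"
    and lam_upd: "\<And>k. lam (Suc k) = y k + \<eta> *\<^sub>R (A *v x (Suc k) - b)"
    and t_upd: "\<And>k. t (Suc k) = (1 + sqrt (1 + 4 * (t k)\<^sup>2)) / 2"
    and y_upd: "\<And>k. y (Suc k) = lam (Suc k)
                  + ((t k - 1) / t (Suc k)) *\<^sub>R (lam (Suc k) - lam k)
                  + (t k / t (Suc k)) *\<^sub>R (lam (Suc k) - y k)"
begin

abbreviation x_opt :: "real^'n" where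
  "x_opt \<equiv> gram_inv A *v (transpose A *v b)"

definition dual_residual :: "nat \<Rightarrow> real^'n" where
  "dual_residual k = transpose A *v y k + c"

lemma b_eq_A_x_opt: "b = A *v x_opt"
proof -
  obtain z where "b = A *v z" using b_range by auto
  then show ?thesis using gram_inv_left_cancel[OF inj] by simp
qed

lemma feasible_iff: "A *v z = b \<longleftrightarrow> z = x_opt"
  using inj by (subst b_eq_A_x_opt) (auto simp: inj_eq)

lemma t_bounds: "real (Suc k) / 2 \<le> t k \<and> t k \<le> real (Suc k)"
  using nesterov_sequence_bounds[OF t0 t_upd] .

lemma t_pos: "t k > 0"
  using t_bounds[of k] by (auto intro: less_le_trans[of 0 "real (Suc k) / 2"])

lemma x_Suc: "x (Suc k) = x_opt - (1 / \<eta>) *\<^sub>R (gram_inv A *v dual_residual k)"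
  using aug_lag_argmin[OF inj eta_pos x_upd] unfolding dual_residual_def
  by (simp add: matrix_vector_mult_diff_distrib matrix_vector_mult_scaleR
      del: transpose_matrix_vector)

lemma lam_dual_feasible: "transpose A *v lam (Suc k) + c = 0"
proof -
  have "transpose A *v (A *v x (Suc k) - b) = - (1 / \<eta>) *\<^sub>R dual_residual k"
    unfolding x_Suc by (subst b_eq_A_x_opt) (simp add: matrix_vector_mult_diff_distrib
        matrix_vector_mult_scaleR gram_inv_right_cancel[OF inj] del: transpose_matrix_vector)
  then show ?thesis
    using eta_pos unfolding lam_upd dual_residual_def
    by (simp add: matrix_vector_right_distrib matrix_vector_mult_scaleR del: transpose_matrix_vector)
qed

lemma dual_residual_Suc: "dual_residual (Suc k) = - (t k / t (Suc k)) *\<^sub>R dual_residual k"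
proof -
  \<comment> \<open>for k \<ge> 1 both multipliers are dual feasible; for k = 0 the factor t 0 - 1 vanishes\<close>
  have momentum: "((t k - 1) / t (Suc k)) *\<^sub>R (transpose A *v (lam (Suc k) - lam k)) = 0"
  proof (cases k)
    case 0
    then show ?thesis using t0 by simp
  next
    case (Suc j)
    then have "transpose A *v lam (Suc k) = transpose A *v lam k"
      using lam_dual_feasible[of j] lam_dual_feasible[of k] by (metis add_right_cancel)
    then show ?thesis by (simp add: matrix_vector_mult_diff_distrib del: transpose_matrix_vector)
  qed
  have feasible: "transpose A *v lam (Suc k) = - c"
    using lam_dual_feasible[of k] by (simp add: eq_neg_iff_add_eq_0 del: transpose_matrix_vector)
  have "dual_residual (Suc k) = (transpose A *v lam (Suc k) + c)
      + ((t k - 1) / t (Suc k)) *\<^sub>R (transpose A *v (lam (Suc k) - lam k))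
      + (t k / t (Suc k)) *\<^sub>R (transpose A *v lam (Suc k) - transpose A *v y k)"
    unfolding dual_residual_def y_upd
    by (simp add: matrix_vector_right_distrib matrix_vector_mult_diff_distrib algebra_simps
        del: transpose_matrix_vector)
  also have "\<dots> = (t k / t (Suc k)) *\<^sub>R (- c - transpose A *v y k)"
    unfolding momentum feasible by simp
  also have "\<dots> = - (t k / t (Suc k)) *\<^sub>R dual_residual k"
    unfolding dual_residual_def by (simp add: algebra_simps)
  finally show ?thesis .
qed

lemma dual_residual_eq: "dual_residual k = ((-1) ^ k / t k) *\<^sub>R c"
proof (induction k)
  case 0
  then show ?case using y0 t0 unfolding dual_residual_def by simp
next
  case (Suc k)
  then show ?case
    using t_pos[of k] t_pos[of "Suc k"] unfolding dual_residual_Suc by (simp add: field_simps)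
qed

lemma lam_dual_optimal: "k \<ge> 1 \<Longrightarrow> dual_optimal A b c (lam k)"
  using dual_optimal_if_feasible[OF b_range] lam_dual_feasible by (cases k) auto

lemma x_closed_form:
  assumes "T \<ge> 1"
  shows "x T = x_opt - ((-1) ^ (T - 1) / (\<eta> * t (T - 1))) *\<^sub>R (gram_inv A *v c)"
proof -
  obtain k where "T = Suc k" using assms by (cases T) auto
  then show ?thesis
    by (simp add: x_Suc dual_residual_eq matrix_vector_mult_scaleR del: transpose_matrix_vector)
qed

lemma residual_closed_form:
  assumes "T \<ge> 1"
  shows "A *v x T - b = - ((-1) ^ (T - 1) / (\<eta> * t (T - 1))) *\<^sub>R (A *v (gram_inv A *v c))"
  unfolding x_closed_form[OF assms] by (subst b_eq_A_x_opt) (simp add: matrix_vector_mult_scaleR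
      matrix_vector_mult_diff_distrib)

lemma t_bounds_shifted: "T \<ge> 1 \<Longrightarrow> real T / 2 \<le> t (T - 1) \<and> t (T - 1) \<le> real T"
  using t_bounds[of "T - 1"] by simp

lemma primal_gap:
  assumes "T \<ge> 1"
  shows "\<bar>c \<bullet> (x_opt - x T)\<bar> = c \<bullet> (gram_inv A *v c) / (\<eta> * t (T - 1))"
  using t_pos[of "T - 1"] eta_pos inner_gram_inv[OF inj, of c]
  unfolding x_closed_form[OF assms] by (simp add: abs_mult power_abs)

lemma feasibility_violation:
  assumes "T \<ge> 1" and "is_norm N"
  shows "N (A *v x T - b) = N (A *v (gram_inv A *v c)) / (\<eta> * t (T - 1))"
proof -
  have "\<And>a v. N (a *\<^sub>R v) = \<bar>a\<bar> * N v" using assms(2) unfolding is_norm_def by blast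
  then have "N (A *v x T - b)
      = \<bar>- ((-1) ^ (T - 1) / (\<eta> * t (T - 1)))\<bar> * N (A *v (gram_inv A *v c))"
    unfolding residual_closed_form[OF assms(1)] scaleR_minus_left[symmetric] .
  then show ?thesis
    using t_pos[of "T - 1"] eta_pos by (simp add: abs_mult power_abs)
qed

lemma exact_rates:
  assumes "c \<noteq> 0"
  shows "(\<lambda>T. \<bar>c \<bullet> (x_opt - x T)\<bar>) \<in> \<Theta>(\<lambda>T. 1 / real T)"
    and "(\<lambda>T. norm (A *v x T - b)) \<in> \<Theta>(\<lambda>T. 1 / real T)"
proof -
  have nonzero: "norm (A *v (gram_inv A *v c)) \<noteq> 0"
    using gram_inv_image_nonzero[OF inj assms] by simp
  have bounds: "eventually (\<lambda>T. \<eta> / 2 * real T \<le> \<eta> * t (T - 1) \<and> \<eta> * t (T - 1) \<le> \<eta> * real T)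
      at_top"
    using eventually_ge_at_top[of 1] by eventually_elim (use t_bounds_shifted eta_pos in auto)
  have "eventually (\<lambda>T. \<bar>c \<bullet> (x_opt - x T)\<bar> = c \<bullet> (gram_inv A *v c) / (\<eta> * t (T - 1)))
      at_top"
    using eventually_ge_at_top[of 1] by eventually_elim (rule primal_gap)
  then show "(\<lambda>T. \<bar>c \<bullet> (x_opt - x T)\<bar>) \<in> \<Theta>(\<lambda>T. 1 / real T)"
    using nonzero eta_pos inner_gram_inv[OF inj, of c]
    by (intro const_divide_bigtheta_inverse[OF _ _ _ bounds]) simp_all
  have "eventually (\<lambda>T. norm (A *v x T - b) = norm (A *v (gram_inv A *v c)) / (\<eta> * t (T - 1)))
      at_top"
    using eventually_ge_at_top[of 1] by eventually_elim (rule feasibility_violation[OF _ is_norm_norm])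
  then show "(\<lambda>T. norm (A *v x T - b)) \<in> \<Theta>(\<lambda>T. 1 / real T)"
    using nonzero eta_pos by (intro const_divide_bigtheta_inverse[OF _ _ _ bounds]) simp_all
qed

end

theorem mainTheorem13:
  fixes A :: "real^'n^'m" and b :: "real^'m" and c :: "real^'n" and \<eta> :: real
    and x :: "nat \<Rightarrow> real^'n" and lam y :: "nat \<Rightarrow> real^'m" and t :: "nat \<Rightarrow> real"
  assumes mn: "CARD('m) > CARD('n)"
    and rk: "rank A = CARD('n)"
    and b_range: "b \<in> range (\<lambda>z. A *v z)"
    and eta_pos: "\<eta> > 0"
    and t0: "t 0 = 1"
    and y0: "y 0 = 0"
    and x_upd: "\<And>k z. aug_lag A b c \<eta> (y k) (x (Suc k)) \<le> aug_lag A b c \<eta> (y k) z"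
    and lam_upd: "\<And>k. lam (Suc k) = y k + \<eta> *\<^sub>R (A *v x (Suc k) - b)"
    and t_upd: "\<And>k. t (Suc k) = (1 + sqrt (1 + 4 * (t k)\<^sup>2)) / 2"
    and y_upd: "\<And>k. y (Suc k) = lam (Suc k)
                  + ((t k - 1) / t (Suc k)) *\<^sub>R (lam (Suc k) - lam k)
                  + (t k / t (Suc k)) *\<^sub>R (lam (Suc k) - y k)"
  defines "M \<equiv> matrix_inv (transpose A ** A)"
  defines "xstar \<equiv> M *v (transpose A *v b)"
  shows "(\<forall>z. A *v z = b \<longleftrightarrow> z = xstar)
    \<and> (\<forall>k\<ge>1. dual_optimal A b c (lam k))
    \<and> (\<forall>T\<ge>1. x T = xstar - ((-1) ^ (T - 1) / (\<eta> * t (T - 1))) *\<^sub>R (M *v c))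
    \<and> (\<forall>T\<ge>1. \<bar>c \<bullet> (xstar - x T)\<bar> = (c \<bullet> (M *v c)) / (\<eta> * t (T - 1)))
    \<and> (\<forall>T\<ge>1. \<forall>N::real^'m \<Rightarrow> real. is_norm N \<longrightarrow>
          N (A *v x T - b) = N (A *v (M *v c)) / (\<eta> * t (T - 1)))
    \<and> (\<forall>T\<ge>1. real T / 2 \<le> t (T - 1) \<and> t (T - 1) \<le> real T)
    \<and> (c \<noteq> 0 \<longrightarrow>
          (\<lambda>T. \<bar>c \<bullet> (xstar - x T)\<bar>) \<in> \<Theta>(\<lambda>T. 1 / real T) \<and>
          (\<lambda>T. norm (A *v x T - b)) \<in> \<Theta>(\<lambda>T. 1 / real T))"
proof -
  have "inj ((*v) A)" using rk full_rank_injective by blast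
  then interpret accelerated_alm A b c \<eta> x lam y t
    using b_range eta_pos t0 y0 x_upd lam_upd t_upd y_upd by unfold_locales
  show ?thesis
    unfolding M_def xstar_def
    using feasible_iff lam_dual_optimal x_closed_form primal_gap feasibility_violation t_bounds_shifted
      exact_rates
    by blast
qed

end
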